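(* The $\mathbf{k}$-algebra homomorphism $A:\mathcal{X}\to\mathcal{Q}$ satisfies $A(\mathcal{J})=0$; equivalently, $A\big(x_{i,j}x_{j,k}-x_{i,k}(x_{i,j}+x_{j,k}+\beta)-\alpha\big)=0$ for all $1\le i<j<k\le n$.
   Context: Let $\mathbf{k}$ be a commutative ring, let $\beta,\alpha\in\mathbf{k}$, and let $n$ be a positive integer; write $[m]=\{1,2,\dots,m\}$. Let $\mathcal{X}=\mathbf{k}[x_{i,j}\mid 1\le i<j\le n]$ be the polynomial ring over $\mathbf{k}$ in the indeterminates $x_{i,j}$. Let $\mathcal{J}$ be the ideal of $\mathcal{X}$ generated by all elements $x_{i,j}x_{j,k}-x_{i,k}(x_{i,j}+x_{j,k}+\beta)-\alpha$ for $1\le i<j<k\le n$. Laurent series: for symbols $r_1,\dots,r_n$, a Laurent series over $\mathbf{k}$ is a formal sum $f=\sum_{a\in\mathbb{Z}^n}\lambda_a r_1^{a_1}\cdots r_n^{a_n}$ ($\lambda_a\in\mathbf{k}$) for which there is $d\in\mathbb{Z}$ such that $\lambda_a=0$ whenever some $a_i<d$. Let $\mathcal{Q}$ be the $\mathbf{k}$-algebra of all such Laurent series with the usual multiplication of series (each coefficient of a product is a finite sum); it contains $\mathbf{k}[[r_1,\dots,r_n]]$ and is given the coefficientwise (product) topology with $\mathbf{k}$ discrete. For $i\in[n]$ put $q_i=r_ir_{i+1}\cdots r_n$; the $q_i$ are invertible in $\mathcal{Q}$, every Laurent monomial $r_1^{b_1}\cdots r_n^{b_n}$ is uniquely of the form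 $q_1^{a_1}\cdots q_n^{a_n}$ with $a\in\mathbb{Z}^n$, and for $i<j$ one has $q_i/q_j=r_ir_{i+1}\cdots r_{j-1}$, so $1-q_i/q_j$ is invertible in $\mathbf{k}[[r_1,\dots,r_n]]$. Let $A:\mathcal{X}\to\mathcal{Q}$ be the $\mathbf{k}$-algebra homomorphism with $A(x_{i,j})=-\dfrac{q_i+\beta+\alpha/q_j}{1-q_i/q_j}$ for $1\le i<j\le n$. *)

theory Defs
  imports Main
begin

text \<open>Laurent series in the symbols r_1,...,r_n over a commutative ring.
  An exponent vector is a function nat => int (only coordinates 1..n are used);
  a series is its coefficient function.\<close>

type_synonym 'a lser = "(nat \<Rightarrow> int) \<Rightarrow> 'a"

definition laurent :: "nat \<Rightarrow> 'a::zero lser \<Rightarrow> bool" where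
  "laurent n f \<longleftrightarrow>
     (\<forall>a. f a \<noteq> 0 \<longrightarrow> (\<forall>i. i \<notin> {1..n} \<longrightarrow> a i = 0)) \<and>
     (\<exists>d::int. \<forall>a. (\<exists>i\<in>{1..n}. a i < d) \<longrightarrow> f a = 0)"

definition ls_zero :: "'a::zero lser" where
  "ls_zero = (\<lambda>a. 0)"

definition ls_const :: "'a::zero \<Rightarrow> 'a lser" where
  "ls_const c = (\<lambda>a. if a = (\<lambda>_. 0) then c else 0)"

definition ls_one :: "'a::{zero,one} lser" where
  "ls_one = ls_const 1"

definition ls_add :: "'a::plus lser \<Rightarrow> 'a lser \<Rightarrow> 'a lser" where
  "ls_add f g = (\<lambda>a. f a + g a)"

definition ls_uminus :: "'a::uminus lser \<Rightarrow> 'a lser" where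
  "ls_uminus f = (\<lambda>a. - f a)"

definition ls_sub :: "'a::minus lser \<Rightarrow> 'a lser \<Rightarrow> 'a lser" where
  "ls_sub f g = (\<lambda>a. f a - g a)"

text \<open>Product of series: each coefficient is a finite sum (for Laurent series).\<close>
definition ls_mult :: "'a::comm_ring_1 lser \<Rightarrow> 'a lser \<Rightarrow> 'a lser" where
  "ls_mult f g = (\<lambda>c. \<Sum>a\<in>{a. f a \<noteq> 0 \<and> g (\<lambda>i. c i - a i) \<noteq> 0}. f a * g (\<lambda>i. c i - a i))"

definition ls_inv :: "nat \<Rightarrow> 'a::comm_ring_1 lser \<Rightarrow> 'a lser" where
  "ls_inv n f = (THE g. laurent n g \<and> ls_mult f g = ls_one)"

text \<open>Monomial q_i = r_i r_{i+1} ... r_n.\<close>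
definition ls_q :: "nat \<Rightarrow> nat \<Rightarrow> 'a::{zero,one} lser" where
  "ls_q n i = (\<lambda>a. if a = (\<lambda>k. if i \<le> k \<and> k \<le> n then 1 else 0) then 1 else 0)"

definition A_x :: "nat \<Rightarrow> 'a::comm_ring_1 \<Rightarrow> 'a \<Rightarrow> nat \<Rightarrow> nat \<Rightarrow> 'a lser" where
  "A_x n \<beta> \<alpha> i j =
     ls_uminus
       (ls_mult
          (ls_add (ls_add (ls_q n i) (ls_const \<beta>)) (ls_mult (ls_const \<alpha>) (ls_inv n (ls_q n j))))
          (ls_inv n (ls_sub ls_one (ls_mult (ls_q n i) (ls_inv n (ls_q n j))))))"

end

theory Submission
  imports Defs "HOL-Library.Groups_Big_Fun" "HOL-Library.FuncSet"
begin

text \<open>Write \<open>u_ab = 1 - q_a/q_b\<close>. In the ring of Laurent series, \<open>A(x_ab)\<close> is the fraction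
  \<open>-(q_a + \<beta> + \<alpha>/q_b) / u_ab\<close>: \<open>1/q_b\<close> is a monomial and \<open>1/u_ab\<close> is the geometric
  series \<open>\<Sum>t. (q_a/q_b)^t\<close>. Multiplying the relation by \<open>u_ij u_jk u_ik\<close> turns it into a
  polynomial identity in \<open>q_i, q_j, 1/q_j, 1/q_k\<close> which is a multiple of \<open>q_j \<cdot> (1/q_j) - 1 = 0\<close>.
  To reason with ring laws, the series supported in a box (finitely many variables, exponents
  bounded below) are made into a commutative ring.\<close>

definition exp_box :: "nat \<Rightarrow> int \<Rightarrow> (nat \<Rightarrow> int) \<Rightarrow> bool" where
  "exp_box n d a \<longleftrightarrow> (\<forall>i\<in>{1..n}. d \<le> a i) \<and> (\<forall>i. i \<notin> {1..n} \<longrightarrow> a i = 0)"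

text \<open>The bound \<open>d \<le> 0\<close> lets a box grow in \<open>n\<close>: the new coordinates are \<open>0\<close>.\<close>
definition supp_box :: "nat \<Rightarrow> int \<Rightarrow> 'a::zero lser \<Rightarrow> bool" where
  "supp_box n d f \<longleftrightarrow> d \<le> 0 \<and> (\<forall>a. f a \<noteq> 0 \<longrightarrow> exp_box n d a)"

definition finite_laurent :: "'a::zero lser \<Rightarrow> bool" where
  "finite_laurent f \<longleftrightarrow> (\<exists>n. laurent n f)"

lemma exp_box_mono: "exp_box n d a \<Longrightarrow> n \<le> n' \<Longrightarrow> d' \<le> d \<Longrightarrow> d' \<le> 0 \<Longrightarrow> exp_box n' d' a"
  unfolding exp_box_def by (metis atLeastAtMost_iff order_trans)

lemma exp_box_add: "exp_box n d a \<Longrightarrow> exp_box n e b \<Longrightarrow> exp_box n (d + e) (\<lambda>i. a i + b i)"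
  unfolding exp_box_def by (simp add: add_mono)

lemma supp_box_mono: "supp_box n d f \<Longrightarrow> n \<le> n' \<Longrightarrow> d' \<le> d \<Longrightarrow> supp_box n' d' f"
  unfolding supp_box_def by (meson exp_box_mono order_trans)

lemma laurent_iff_supp_box: "laurent n f \<longleftrightarrow> (\<exists>d. supp_box n d f)"
proof
  assume "laurent n f"
  then obtain d where "\<forall>a. f a \<noteq> 0 \<longrightarrow> (\<forall>i. i \<notin> {1..n} \<longrightarrow> a i = 0)"
      and "\<forall>a. (\<exists>i\<in>{1..n}. a i < d) \<longrightarrow> f a = 0"
    unfolding laurent_def by blast
  then have "supp_box n (min d 0) f"
    unfolding supp_box_def exp_box_def by (meson min.cobounded2 min.coboundedI1 not_less)
  then show "\<exists>d. supp_box n d f" ..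
next
  assume "\<exists>d. supp_box n d f"
  then show "laurent n f"
    unfolding laurent_def supp_box_def exp_box_def by (meson not_less)
qed

lemma finite_laurent_iff_supp_box: "finite_laurent f \<longleftrightarrow> (\<exists>n d. supp_box n d f)"
  unfolding finite_laurent_def laurent_iff_supp_box ..

lemma finite_laurent_common_box:
  assumes "finite F" "\<forall>f\<in>F. finite_laurent f"
  shows "\<exists>n d. \<forall>f\<in>F. supp_box n d f"
  using assms
proof (induction F rule: finite_induct)
  case (insert g F)
  then obtain n d where F: "\<forall>f\<in>F. supp_box n d f" by blast
  obtain n' d' where g: "supp_box n' d' g"
    using insert.prems finite_laurent_iff_supp_box by blast
  have "\<forall>f\<in>insert g F. supp_box (max n n') (min d d') f"
    using F g
    by (metis insert_iff max.cobounded1 max.cobounded2 min.cobounded1 min.cobounded2 supp_box_mono)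
  then show ?case by blast
qed simp

lemma finite_exp_box_pairs: "finite {a. exp_box n d a \<and> exp_box n d (\<lambda>i. c i - a i)}"
proof -
  let ?E = "\<lambda>p i. if i \<in> {1..n} then p i else (0::int)"
  have "{a. exp_box n d a \<and> exp_box n d (\<lambda>i. c i - a i)} \<subseteq> ?E ` (PiE {1..n} (\<lambda>i. {d..c i - d}))"
  proof
    fix a assume a: "a \<in> {a. exp_box n d a \<and> exp_box n d (\<lambda>i. c i - a i)}"
    then have "a = ?E (restrict a {1..n})" "restrict a {1..n} \<in> PiE {1..n} (\<lambda>i. {d..c i - d})"
      by (auto simp: exp_box_def fun_eq_iff)
    then show "a \<in> ?E ` (PiE {1..n} (\<lambda>i. {d..c i - d}))" by blast
  qed
  then show ?thesis
    by (rule finite_subset) (intro finite_imageI finite_PiE; simp)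
qed

lemma finite_convolution_support:
  assumes "supp_box n d f" "supp_box n d g"
  shows "finite {a. f a \<noteq> 0 \<and> g (\<lambda>i. c i - a i) \<noteq> 0}"
  by (rule finite_subset[OF _ finite_exp_box_pairs[of n d c]])
    (use assms in \<open>auto simp: supp_box_def\<close>)

lemma finite_convolution_support_mult:
  fixes f g :: "'a::comm_ring_1 lser"
  assumes "supp_box n d f" "supp_box n d g"
  shows "finite {a. f a * g (\<lambda>i. c i - a i) \<noteq> 0}"
  by (rule finite_subset[OF _ finite_convolution_support[OF assms, of c]]) auto

lemma ls_mult_eq_Sum_any:
  fixes f g :: "'a::comm_ring_1 lser"
  assumes "supp_box n d f" "supp_box n d g"
  shows "ls_mult f g c = Sum_any (\<lambda>a. f a * g (\<lambda>i. c i - a i))"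
  unfolding ls_mult_def
  by (rule Sum_any.expand_superset[OF finite_convolution_support[OF assms], symmetric]) auto

lemma supp_box_ls_mult:
  fixes f g :: "'a::comm_ring_1 lser"
  assumes "supp_box n d f" "supp_box n e g"
  shows "supp_box n (d + e) (ls_mult f g)"
  unfolding supp_box_def
proof (intro conjI allI impI)
  show "d + e \<le> 0" using assms by (simp add: supp_box_def)
  fix c assume "ls_mult f g c \<noteq> 0"
  then obtain a where "f a \<noteq> 0" "g (\<lambda>i. c i - a i) \<noteq> 0"
    unfolding ls_mult_def by (metis (mono_tags, lifting) mem_Collect_eq sum.not_neutral_contains_not_neutral)
  then have "exp_box n (d + e) (\<lambda>i. a i + (c i - a i))"
    using assms by (intro exp_box_add) (auto simp: supp_box_def)
  then show "exp_box n (d + e) c" by simp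
qed

lemma finite_laurent_ls_mult:
  fixes f g :: "'a::comm_ring_1 lser"
  assumes "finite_laurent f" "finite_laurent g"
  shows "finite_laurent (ls_mult f g)"
proof -
  obtain n d where "supp_box n d f" "supp_box n d g"
    using finite_laurent_common_box[of "{f, g}"] assms by auto
  then show ?thesis
    unfolding finite_laurent_iff_supp_box by (blast intro: supp_box_ls_mult)
qed

lemma finite_laurent_pointwise:
  fixes f g h :: "'a::zero lser"
  assumes "finite_laurent f" "finite_laurent g" "\<And>a. h a \<noteq> 0 \<Longrightarrow> f a \<noteq> 0 \<or> g a \<noteq> 0"
  shows "finite_laurent h"
proof -
  obtain n d where "supp_box n d f" "supp_box n d g"
    using finite_laurent_common_box[of "{f, g}"] assms by auto
  then have "supp_box n d h" using assms(3) by (auto simp: supp_box_def)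
  then show ?thesis unfolding finite_laurent_iff_supp_box by blast
qed

lemma finite_laurent_ls_add:
  "finite_laurent f \<Longrightarrow> finite_laurent g \<Longrightarrow> finite_laurent (ls_add f (g::'a::monoid_add lser))"
  by (erule finite_laurent_pointwise) (auto simp: ls_add_def)

lemma finite_laurent_ls_sub:
  "finite_laurent f \<Longrightarrow> finite_laurent g \<Longrightarrow> finite_laurent (ls_sub f (g::'a::group_add lser))"
  by (erule finite_laurent_pointwise) (auto simp: ls_sub_def)

lemma finite_laurent_ls_uminus: "finite_laurent f \<Longrightarrow> finite_laurent (ls_uminus (f::'a::group_add lser))"
  by (rule finite_laurent_pointwise[of f f]) (auto simp: ls_uminus_def)

lemma finite_laurent_ls_const: "finite_laurent (ls_const c)"
  unfolding finite_laurent_iff_supp_box supp_box_def exp_box_def ls_const_def by auto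

lemma finite_laurent_ls_zero: "finite_laurent ls_zero"
  unfolding finite_laurent_iff_supp_box supp_box_def ls_zero_def by auto

definition mon :: "(nat \<Rightarrow> int) \<Rightarrow> 'a::{zero,one} lser" where
  "mon e = (\<lambda>a. if a = e then 1 else 0)"

lemma ls_mult_mon: "ls_mult (mon e) f = (\<lambda>c. f (\<lambda>i. c i - e i))"
proof
  fix c
  have "{a. mon e a \<noteq> (0::'a) \<and> f (\<lambda>i. c i - a i) \<noteq> 0} \<subseteq> {e}"
    by (auto simp: mon_def)
  then show "ls_mult (mon e) f c = f (\<lambda>i. c i - e i)"
    unfolding ls_mult_def by (subst sum.mono_neutral_left[of "{e}"]) (auto simp: mon_def)
qed

lemma ls_one_eq_mon: "ls_one = mon (\<lambda>_. 0)"
  unfolding ls_one_def ls_const_def mon_def ..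

lemma bij_translate: "bij (\<lambda>e::nat \<Rightarrow> int. \<lambda>i. b i + e i)"
  by (rule bijI) (auto simp: inj_def fun_eq_iff surj_def intro!: exI[of _ "\<lambda>i. _ i - b i"])

lemma bij_reflect: "bij (\<lambda>a::nat \<Rightarrow> int. \<lambda>i. c i - a i)"
  by (rule bijI) (auto simp: inj_def fun_eq_iff surj_def intro!: exI[of _ "\<lambda>i. c i - _ i"])

lemma ls_mult_commute:
  fixes f g :: "'a::comm_ring_1 lser"
  assumes "finite_laurent f" "finite_laurent g"
  shows "ls_mult f g = ls_mult g f"
proof
  fix c
  obtain n d where f: "supp_box n d f" and g: "supp_box n d g"
    using finite_laurent_common_box[of "{f, g}"] assms by auto
  have "ls_mult f g c = Sum_any (\<lambda>a. f a * g (\<lambda>i. c i - a i))"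
    by (rule ls_mult_eq_Sum_any[OF f g])
  also have "\<dots> = Sum_any (\<lambda>a. g a * f (\<lambda>i. c i - a i))"
    by (rule Sum_any.reindex_cong[OF bij_reflect[of c]]) (simp add: fun_eq_iff mult.commute)
  also have "\<dots> = ls_mult g f c"
    by (rule ls_mult_eq_Sum_any[OF g f, symmetric])
  finally show "ls_mult f g c = ls_mult g f c" .
qed

lemma ls_mult_distrib:
  fixes f g h :: "'a::comm_ring_1 lser"
  assumes "finite_laurent f" "finite_laurent g" "finite_laurent h"
  shows "ls_mult (ls_add f g) h = ls_add (ls_mult f h) (ls_mult g h)"
proof
  fix c
  obtain n d where f: "supp_box n d f" and g: "supp_box n d g" and h: "supp_box n d h"
    using finite_laurent_common_box[of "{f, g, h}"] assms by auto
  have fg: "supp_box n d (ls_add f g)"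
    using f g unfolding supp_box_def ls_add_def by (metis add.right_neutral)
  have "ls_mult (ls_add f g) h c
      = Sum_any (\<lambda>a. f a * h (\<lambda>i. c i - a i) + g a * h (\<lambda>i. c i - a i))"
    unfolding ls_mult_eq_Sum_any[OF fg h] by (simp add: ls_add_def distrib_right)
  also have "\<dots> = ls_add (ls_mult f h) (ls_mult g h) c"
    unfolding ls_add_def ls_mult_eq_Sum_any[OF f h] ls_mult_eq_Sum_any[OF g h]
    by (rule Sum_any.distrib[OF finite_convolution_support_mult[OF f h]
          finite_convolution_support_mult[OF g h]])
  finally show "ls_mult (ls_add f g) h c = ls_add (ls_mult f h) (ls_mult g h) c" .
qed

lemma ls_mult_assoc:
  fixes f g h :: "'a::comm_ring_1 lser"
  assumes "finite_laurent f" "finite_laurent g" "finite_laurent h"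
  shows "ls_mult (ls_mult f g) h = ls_mult f (ls_mult g h)"
proof
  fix c
  obtain n d where f: "supp_box n d f" and g: "supp_box n d g" and h: "supp_box n d h"
    using finite_laurent_common_box[of "{f, g, h}"] assms by auto
  have d: "d \<le> 0" using f by (simp add: supp_box_def)
  have f2: "supp_box n (d + d) f" and h2: "supp_box n (d + d) h"
    using f h d by (auto intro: supp_box_mono)
  note fg = supp_box_ls_mult[OF f g] and gh = supp_box_ls_mult[OF g h]
  let ?K = "{a. exp_box n (d + d) a \<and> exp_box n (d + d) (\<lambda>i. c i - a i)}"
  let ?\<phi> = "\<lambda>a b. f b * g (\<lambda>i. a i - b i) * h (\<lambda>i. c i - a i)"
  have K: "a \<in> ?K \<and> b \<in> ?K" if "?\<phi> a b \<noteq> 0" for a b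
  proof -
    have "f b \<noteq> 0" "g (\<lambda>i. a i - b i) \<noteq> 0" "h (\<lambda>i. c i - a i) \<noteq> 0"
      using that by auto
    then have b: "exp_box n d b" and ab: "exp_box n d (\<lambda>i. a i - b i)"
      and ca: "exp_box n d (\<lambda>i. c i - a i)"
      using f g h by (auto simp: supp_box_def)
    have "exp_box n (d + d) (\<lambda>i. b i + (a i - b i))" by (rule exp_box_add[OF b ab])
    moreover have "exp_box n (d + d) (\<lambda>i. (a i - b i) + (c i - a i))" by (rule exp_box_add[OF ab ca])
    moreover have "exp_box n (d + d) (\<lambda>i. c i - a i)" "exp_box n (d + d) b"
      using b ca d by (auto intro: exp_box_mono)
    moreover have "(\<lambda>i. b i + (a i - b i)) = a" "(\<lambda>i. (a i - b i) + (c i - a i)) = (\<lambda>i. c i - b i)"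
      by auto
    ultimately show ?thesis by (simp only: mem_Collect_eq simp_thms)
  qed
  have "ls_mult (ls_mult f g) h c = Sum_any (\<lambda>a. Sum_any (\<lambda>b. ?\<phi> a b))"
    unfolding ls_mult_eq_Sum_any[OF fg h2] ls_mult_eq_Sum_any[OF f g]
    by (simp add: Sum_any_left_distrib[OF finite_convolution_support_mult[OF f g]])
  also have "\<dots> = Sum_any (\<lambda>b. Sum_any (\<lambda>a. ?\<phi> a b))"
    by (rule Sum_any.swap[of "?K \<times> ?K"]) (use finite_exp_box_pairs K in blast)+
  also have "\<dots> = Sum_any (\<lambda>b. Sum_any (\<lambda>e. f b * (g e * h (\<lambda>i. (c i - b i) - e i))))"
  proof (rule Sum_any.cong)
    show "Sum_any (\<lambda>a. ?\<phi> a b) = Sum_any (\<lambda>e. f b * (g e * h (\<lambda>i. (c i - b i) - e i)))" for b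
      by (rule Sum_any.reindex_cong[OF bij_translate[of b]]) (simp add: fun_eq_iff algebra_simps)
  qed
  also have "\<dots> = ls_mult f (ls_mult g h) c"
    unfolding ls_mult_eq_Sum_any[OF f2 gh] ls_mult_eq_Sum_any[OF g h]
    by (simp add: Sum_any_right_distrib[OF finite_convolution_support_mult[OF g h]])
  finally show "ls_mult (ls_mult f g) h c = ls_mult f (ls_mult g h) c" .
qed

typedef (overloaded) ('a::comm_ring_1) lseries = "{f :: 'a lser. finite_laurent f}"
  using finite_laurent_ls_zero by blast

setup_lifting type_definition_lseries

instantiation lseries :: (comm_ring_1) comm_ring_1
begin

lift_definition zero_lseries :: "'a lseries" is ls_zero by (rule finite_laurent_ls_zero)
lift_definition one_lseries :: "'a lseries" is ls_one
  unfolding ls_one_def by (rule finite_laurent_ls_const)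
lift_definition plus_lseries :: "'a lseries \<Rightarrow> 'a lseries \<Rightarrow> 'a lseries" is ls_add
  by (rule finite_laurent_ls_add)
lift_definition minus_lseries :: "'a lseries \<Rightarrow> 'a lseries \<Rightarrow> 'a lseries" is ls_sub
  by (rule finite_laurent_ls_sub)
lift_definition uminus_lseries :: "'a lseries \<Rightarrow> 'a lseries" is ls_uminus
  by (rule finite_laurent_ls_uminus)
lift_definition times_lseries :: "'a lseries \<Rightarrow> 'a lseries \<Rightarrow> 'a lseries" is ls_mult
  by (rule finite_laurent_ls_mult)

instance
proof
  fix a b c :: "'a lseries"
  show "a * b * c = a * (b * c)" by transfer (rule ls_mult_assoc)
  show "a * b = b * a" by transfer (rule ls_mult_commute)
  show "1 * a = a" by transfer (simp add: ls_one_eq_mon ls_mult_mon)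
  show "a + b + c = a + (b + c)" by transfer (simp add: ls_add_def add.assoc)
  show "a + b = b + a" by transfer (simp add: ls_add_def add.commute)
  show "0 + a = a" by transfer (simp add: ls_add_def ls_zero_def)
  show "- a + a = 0" by transfer (simp add: ls_add_def ls_zero_def ls_uminus_def)
  show "a - b = a + - b" by transfer (simp add: ls_add_def ls_sub_def ls_uminus_def)
  show "(a + b) * c = a * c + b * c" by transfer (rule ls_mult_distrib)
  have "Rep_lseries (0::'a lseries) (\<lambda>_. 0) \<noteq> Rep_lseries 1 (\<lambda>_. 0)"
    by (simp add: zero_lseries.rep_eq one_lseries.rep_eq ls_zero_def ls_one_def ls_const_def)
  then show "(0::'a lseries) \<noteq> 1" by metis
qed

end

lift_definition lconst :: "'a::comm_ring_1 \<Rightarrow> 'a lseries" is ls_const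
  by (rule finite_laurent_ls_const)

lemma Rep_lseries_Abs: "finite_laurent f \<Longrightarrow> Rep_lseries (Abs_lseries f) = f"
  by (simp add: Abs_lseries_inverse)

lemma ls_inv_Rep_lseries:
  assumes "x * y = 1" "laurent n (Rep_lseries y)"
  shows "ls_inv n (Rep_lseries x) = Rep_lseries y"
  unfolding ls_inv_def
proof (rule the_equality)
  show "laurent n (Rep_lseries y) \<and> ls_mult (Rep_lseries x) (Rep_lseries y) = ls_one"
    using assms by (metis times_lseries.rep_eq one_lseries.rep_eq)
  fix g assume g: "laurent n g \<and> ls_mult (Rep_lseries x) g = ls_one"
  then have g_fin: "finite_laurent g" by (auto simp: finite_laurent_def)
  then have "x * Abs_lseries g = 1"
    using g by (metis Rep_lseries_inject Rep_lseries_Abs times_lseries.rep_eq one_lseries.rep_eq)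
  then have "Abs_lseries g = y"
    using assms(1) by (metis mult.assoc mult.commute mult_1_right)
  then show "g = Rep_lseries y" using g_fin Rep_lseries_Abs by metis
qed

lemma mon_mult: "ls_mult (mon e) (mon e') = mon (\<lambda>i. e i + e' i)"
  unfolding ls_mult_mon by (auto simp: mon_def fun_eq_iff diff_eq_eq add.commute)

lemma laurent_mon:
  assumes "\<forall>i. i \<notin> {1..n} \<longrightarrow> e i = 0"
  shows "laurent n (mon e)"
proof -
  let ?d = "- (\<Sum>i\<in>{1..n}. \<bar>e i\<bar>)"
  have "?d \<le> e i" if "i \<in> {1..n}" for i
  proof -
    have "\<bar>e i\<bar> \<le> (\<Sum>i\<in>{1..n}. \<bar>e i\<bar>)" by (rule member_le_sum) (use that in auto)
    then show ?thesis by linarith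
  qed
  then have "supp_box n ?d (mon e)"
    using assms by (auto simp: supp_box_def exp_box_def mon_def sum_nonneg)
  then show ?thesis unfolding laurent_iff_supp_box by blast
qed

definition lmon :: "(nat \<Rightarrow> int) \<Rightarrow> 'a::comm_ring_1 lseries" where
  "lmon e = Abs_lseries (mon e)"

lemma Rep_lmon:
  assumes "\<forall>i. i \<notin> {1..n} \<longrightarrow> e i = 0"
  shows "Rep_lseries (lmon e) = mon e"
  unfolding lmon_def
  by (rule Rep_lseries_Abs) (use laurent_mon[OF assms] in \<open>auto simp: finite_laurent_def\<close>)

lemma lmon_mult:
  assumes "\<forall>i. i \<notin> {1..n} \<longrightarrow> e i = 0" "\<forall>i. i \<notin> {1..n} \<longrightarrow> e' i = 0"
  shows "lmon e * lmon e' = lmon (\<lambda>i. e i + e' i)"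
proof -
  have "\<forall>i. i \<notin> {1..n} \<longrightarrow> e i + e' i = 0" using assms by simp
  then show ?thesis
    by (intro Rep_lseries_inject[THEN iffD1])
      (simp add: times_lseries.rep_eq Rep_lmon[of n] assms mon_mult)
qed

lemma lmon_zero: "lmon (\<lambda>_. 0) = 1"
  by (rule Rep_lseries_inject[THEN iffD1]) (simp add: one_lseries.rep_eq Rep_lmon[of 0] ls_one_eq_mon)

definition geo :: "(nat \<Rightarrow> int) \<Rightarrow> 'a::{zero,one} lser" where
  "geo e = (\<lambda>a. if \<exists>t::nat. a = (\<lambda>i. int t * e i) then 1 else 0)"

lemma laurent_geo:
  assumes "\<forall>i. i \<notin> {1..n} \<longrightarrow> e i = 0" "\<forall>i. 0 \<le> e i"
  shows "laurent n (geo e)"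
proof -
  have "supp_box n 0 (geo e)"
    using assms by (auto simp: supp_box_def exp_box_def geo_def split: if_splits)
  then show ?thesis unfolding laurent_iff_supp_box by blast
qed

lemma geo_shift:
  assumes "e \<noteq> (\<lambda>_. 0)"
  shows "ls_sub (geo e) (ls_mult (mon e) (geo e)) = ls_one"
proof
  fix c
  obtain k where k: "e k \<noteq> 0" using assms by auto
  let ?M = "\<lambda>a. \<exists>t::nat. a = (\<lambda>i. int t * e i)"
  have step: "?M (\<lambda>i. c i - e i) \<longleftrightarrow> ?M c \<and> c \<noteq> (\<lambda>_. 0)"
  proof
    assume "?M (\<lambda>i. c i - e i)"
    then obtain s :: nat where "(\<lambda>i. c i - e i) = (\<lambda>i. int s * e i)" by blast
    then have c: "c = (\<lambda>i. int (Suc s) * e i)" by (auto simp: fun_eq_iff algebra_simps dest: fun_cong)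
    then have "?M c" by blast
    moreover have "c \<noteq> (\<lambda>_. 0)" using c k by (auto dest: fun_cong[where x = k])
    ultimately show "?M c \<and> c \<noteq> (\<lambda>_. 0)" ..
  next
    assume "?M c \<and> c \<noteq> (\<lambda>_. 0)"
    then obtain t :: nat where "c = (\<lambda>i. int t * e i)" and "t \<noteq> 0"
      by (metis mult_zero_left of_nat_0)
    then have "(\<lambda>i. c i - e i) = (\<lambda>i. int (t - 1) * e i)" by (auto simp: fun_eq_iff algebra_simps of_nat_diff)
    then show "?M (\<lambda>i. c i - e i)" by blast
  qed
  have "?M (\<lambda>_. 0)" by (auto intro: exI[of _ 0])
  with step show "ls_sub (geo e) (ls_mult (mon e) (geo e)) c = ls_one c"
    unfolding ls_sub_def ls_mult_mon geo_def ls_one_def ls_const_def by auto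
qed

definition lgeo :: "(nat \<Rightarrow> int) \<Rightarrow> 'a::comm_ring_1 lseries" where
  "lgeo e = Abs_lseries (geo e)"

lemma Rep_lgeo:
  assumes "\<forall>i. i \<notin> {1..n} \<longrightarrow> e i = 0" "\<forall>i. 0 \<le> e i"
  shows "Rep_lseries (lgeo e) = geo e"
  unfolding lgeo_def
  by (rule Rep_lseries_Abs) (use laurent_geo[OF assms] in \<open>auto simp: finite_laurent_def\<close>)

lemma lgeo_inverse:
  assumes "\<forall>i. i \<notin> {1..n} \<longrightarrow> e i = 0" "\<forall>i. 0 \<le> e i" "e \<noteq> (\<lambda>_. 0)"
  shows "(1 - lmon e) * lgeo e = 1"
proof -
  have "(1 - lmon e) * lgeo e = lgeo e - lmon e * lgeo e" by (simp add: algebra_simps)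
  also have "\<dots> = 1"
    by (rule Rep_lseries_inject[THEN iffD1])
      (simp add: minus_lseries.rep_eq times_lseries.rep_eq one_lseries.rep_eq
        Rep_lmon[OF assms(1)] Rep_lgeo[OF assms(1,2)] geo_shift[OF assms(3)])
  finally show ?thesis .
qed

text \<open>\<open>segment_exp a b\<close> is the exponent vector of \<open>r_a r_(a+1) \<cdots> r_(b-1)\<close>; thus
  \<open>q_a = r^(segment_exp a (n + 1))\<close> and \<open>q_a/q_b = r^(segment_exp a b)\<close>.\<close>
definition segment_exp :: "nat \<Rightarrow> nat \<Rightarrow> nat \<Rightarrow> int" where
  "segment_exp a b = (\<lambda>k. if a \<le> k \<and> k < b then 1 else 0)"

lemma ls_q_eq_mon: "ls_q n a = mon (segment_exp a (Suc n))"
  unfolding ls_q_def mon_def segment_exp_def by (simp add: less_Suc_eq_le)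

lemma segment_exp_support: "1 \<le> a \<Longrightarrow> b \<le> Suc n \<Longrightarrow> \<forall>k. k \<notin> {1..n} \<longrightarrow> segment_exp a b k = 0"
  unfolding segment_exp_def by auto

lemma lmon_segment_quotient:
  assumes "1 \<le> a" "a \<le> b" "b \<le> c"
  shows "lmon (segment_exp a c) * lmon (\<lambda>k. - segment_exp b c k) = lmon (segment_exp a b)"
proof -
  have "\<forall>k. k \<notin> {1..c} \<longrightarrow> - segment_exp b c k = 0"
    using assms segment_exp_support[of b c c] by auto
  then have "lmon (segment_exp a c) * lmon (\<lambda>k. - segment_exp b c k)
      = lmon (\<lambda>k. segment_exp a c k + - segment_exp b c k)"
    using assms segment_exp_support[of a c c] by (intro lmon_mult) auto
  also have "(\<lambda>k. segment_exp a c k + - segment_exp b c k) = segment_exp a b"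
    using assms by (auto simp: segment_exp_def)
  finally show ?thesis .
qed

lemma lmon_segment_inverse:
  assumes "1 \<le> a" "a \<le> c"
  shows "lmon (segment_exp a c) * lmon (\<lambda>k. - segment_exp a c k) = 1"
proof -
  have "segment_exp a a = (\<lambda>_. 0)" unfolding segment_exp_def by auto
  then show ?thesis using lmon_segment_quotient[OF assms(1) order_refl assms(2)] by (simp add: lmon_zero)
qed

lemma lgeo_segment_inverse:
  assumes "1 \<le> a" "a < b"
  shows "(1 - lmon (segment_exp a b)) * lgeo (segment_exp a b) = 1"
proof (rule lgeo_inverse)
  show "\<forall>k. k \<notin> {1..b} \<longrightarrow> segment_exp a b k = 0" using assms by (auto simp: segment_exp_def)
  show "\<forall>k. 0 \<le> segment_exp a b k" by (simp add: segment_exp_def)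
  show "segment_exp a b \<noteq> (\<lambda>_. 0)" using assms by (auto simp: segment_exp_def fun_eq_iff)
qed

definition A_fraction :: "'a::comm_ring_1 \<Rightarrow> 'a \<Rightarrow> 'a \<Rightarrow> 'a \<Rightarrow> 'a \<Rightarrow> 'a" where
  "A_fraction \<beta> \<alpha> q p g = - ((q + \<beta> + \<alpha> * p) * g)"

lemma A_fraction_relation:
  fixes \<beta> \<alpha> q_i q_j p_j p_k g_ij g_jk g_ik :: "'a::comm_ring_1"
  assumes "q_j * p_j = 1"
    and "(1 - q_i * p_j) * g_ij = 1" "(1 - q_j * p_k) * g_jk = 1" "(1 - q_i * p_k) * g_ik = 1"
  shows "A_fraction \<beta> \<alpha> q_i p_j g_ij * A_fraction \<beta> \<alpha> q_j p_k g_jk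
      - A_fraction \<beta> \<alpha> q_i p_k g_ik * (A_fraction \<beta> \<alpha> q_i p_j g_ij + A_fraction \<beta> \<alpha> q_j p_k g_jk + \<beta>)
      - \<alpha> = 0"
    (is "?E = 0")
proof -
  define u_ij u_jk u_ik where "u_ij = 1 - q_i * p_j" and "u_jk = 1 - q_j * p_k" and "u_ik = 1 - q_i * p_k"
  have frac: "A_fraction \<beta> \<alpha> q p g * u = - (q + \<beta> + \<alpha> * p)" if "u * g = 1" for q p g u
  proof -
    have "A_fraction \<beta> \<alpha> q p g * u = - ((q + \<beta> + \<alpha> * p) * (u * g))"
      by (simp add: A_fraction_def algebra_simps)
    then show ?thesis using that by simp
  qed
  have x_ij: "A_fraction \<beta> \<alpha> q_i p_j g_ij * u_ij = - (q_i + \<beta> + \<alpha> * p_j)"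
    and x_jk: "A_fraction \<beta> \<alpha> q_j p_k g_jk * u_jk = - (q_j + \<beta> + \<alpha> * p_k)"
    and x_ik: "A_fraction \<beta> \<alpha> q_i p_k g_ik * u_ik = - (q_i + \<beta> + \<alpha> * p_k)"
    unfolding u_ij_def u_jk_def u_ik_def by (rule frac, fact)+
  have "?E * u_ij * u_jk * u_ik
      = (A_fraction \<beta> \<alpha> q_i p_j g_ij * u_ij) * (A_fraction \<beta> \<alpha> q_j p_k g_jk * u_jk) * u_ik
        - (A_fraction \<beta> \<alpha> q_i p_k g_ik * u_ik) * ((A_fraction \<beta> \<alpha> q_i p_j g_ij * u_ij) * u_jk
           + (A_fraction \<beta> \<alpha> q_j p_k g_jk * u_jk) * u_ij + \<beta> * u_ij * u_jk)
        - \<alpha> * u_ij * u_jk * u_ik"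
    by (simp add: algebra_simps)
  also have "\<dots> = (- (q_i + \<beta> + \<alpha> * p_j)) * (- (q_j + \<beta> + \<alpha> * p_k)) * u_ik
        - (- (q_i + \<beta> + \<alpha> * p_k)) * ((- (q_i + \<beta> + \<alpha> * p_j)) * u_jk
           + (- (q_j + \<beta> + \<alpha> * p_k)) * u_ij + \<beta> * u_ij * u_jk)
        - \<alpha> * u_ij * u_jk * u_ik"
    by (simp only: x_ij x_jk x_ik)
  also have "\<dots> = (q_j * p_j - 1) * (\<alpha> + q_i * q_i + q_i * q_i * p_k * \<beta> + p_k * \<beta> * \<alpha> + q_i * \<beta>
      + q_i * p_k * \<beta> * \<beta> + p_k * p_k * \<alpha> * \<alpha> + q_i * p_k * p_k * \<beta> * \<alpha> + q_i * q_i * p_k * p_k * \<alpha>)"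
    unfolding u_ij_def u_jk_def u_ik_def by (simp add: algebra_simps)
  also have "\<dots> = 0" using assms(1) by simp
  finally have "?E * u_ij * u_jk * u_ik = 0" .
  then have "?E * (u_ij * g_ij) * (u_jk * g_jk) * (u_ik * g_ik) = 0" by (simp add: algebra_simps)
  then show ?thesis using assms(2-4) unfolding u_ij_def u_jk_def u_ik_def by simp
qed

lemma A_x_eq_Rep_A_fraction:
  assumes "1 \<le> i" "i < j" "j \<le> n"
  shows "A_x n \<beta> \<alpha> i j = Rep_lseries (A_fraction (lconst \<beta>) (lconst \<alpha>) (lmon (segment_exp i (Suc n)))
    (lmon (\<lambda>k. - segment_exp j (Suc n) k)) (lgeo (segment_exp i j)))"
proof -
  let ?Q = "\<lambda>a. lmon (segment_exp a (Suc n)) :: 'a lseries"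
  let ?P = "lmon (\<lambda>k. - segment_exp j (Suc n) k) :: 'a lseries"
  let ?G = "lgeo (segment_exp i j) :: 'a lseries"
  have Q: "Rep_lseries (?Q a) = ls_q n a" if "1 \<le> a" for a
    using Rep_lmon[OF segment_exp_support[OF that order_refl]] by (simp add: ls_q_eq_mon)
  have P_supp: "\<forall>k. k \<notin> {1..n} \<longrightarrow> - segment_exp j (Suc n) k = 0"
    using segment_exp_support[of j "Suc n" n] assms by auto
  have "ls_inv n (Rep_lseries (?Q j)) = Rep_lseries ?P"
  proof (rule ls_inv_Rep_lseries)
    show "?Q j * ?P = 1" using assms by (simp add: lmon_segment_inverse)
    show "laurent n (Rep_lseries ?P)" by (subst Rep_lmon[OF P_supp]) (rule laurent_mon[OF P_supp])
  qed
  then have P: "ls_inv n (ls_q n j) = Rep_lseries ?P" using Q assms by simp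
  have "ls_inv n (Rep_lseries (1 - ?Q i * ?P)) = Rep_lseries ?G"
  proof (rule ls_inv_Rep_lseries)
    show "(1 - ?Q i * ?P) * ?G = 1"
      using assms by (simp add: lmon_segment_quotient lgeo_segment_inverse)
    have "\<forall>k. k \<notin> {1..n} \<longrightarrow> segment_exp i j k = 0" "\<forall>k. 0 \<le> segment_exp i j k"
      using assms by (auto simp: segment_exp_def)
    then show "laurent n (Rep_lseries ?G)" using Rep_lgeo laurent_geo by metis
  qed
  then have G: "ls_inv n (ls_sub ls_one (ls_mult (ls_q n i) (Rep_lseries ?P))) = Rep_lseries ?G"
    using Q assms by (simp add: minus_lseries.rep_eq times_lseries.rep_eq one_lseries.rep_eq)
  show ?thesis
    unfolding A_x_def P G A_fraction_def
    using Q assms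
    by (simp add: uminus_lseries.rep_eq times_lseries.rep_eq plus_lseries.rep_eq lconst.rep_eq)
qed

theorem proposition3p5:
  fixes \<beta> \<alpha> :: "'a::comm_ring_1" and n i j k :: nat
  assumes "1 \<le> i" and "i < j" and "j < k" and "k \<le> n"
  shows "ls_sub
           (ls_sub (ls_mult (A_x n \<beta> \<alpha> i j) (A_x n \<beta> \<alpha> j k))
                   (ls_mult (A_x n \<beta> \<alpha> i k)
                      (ls_add (ls_add (A_x n \<beta> \<alpha> i j) (A_x n \<beta> \<alpha> j k)) (ls_const \<beta>))))
           (ls_const \<alpha>) = ls_zero"
proof -
  let ?Q = "\<lambda>a. lmon (segment_exp a (Suc n)) :: 'a lseries"
  let ?P = "\<lambda>b. lmon (\<lambda>k. - segment_exp b (Suc n) k) :: 'a lseries"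
  let ?X = "\<lambda>a b. A_fraction (lconst \<beta>) (lconst \<alpha>) (?Q a) (?P b) (lgeo (segment_exp a b))"
  have "?X i j * ?X j k - ?X i k * (?X i j + ?X j k + lconst \<beta>) - lconst \<alpha> = 0"
  proof (rule A_fraction_relation)
  qed (use assms in \<open>simp_all add: lmon_segment_inverse lmon_segment_quotient lgeo_segment_inverse\<close>)
  then have "Rep_lseries (?X i j * ?X j k - ?X i k * (?X i j + ?X j k + lconst \<beta>) - lconst \<alpha>)
      = Rep_lseries 0"
    by simp
  then show ?thesis
    using assms
    by (simp add: A_x_eq_Rep_A_fraction minus_lseries.rep_eq times_lseries.rep_eq
        plus_lseries.rep_eq lconst.rep_eq zero_lseries.rep_eq)
qed

end
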